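(* Let $\theta:\mathbb{A}\to\mathbb{A}^\lambda$ be a primitive substitution satisfying the standing assumptions, with height $h=h(\theta)$ and pure base $\theta^{(h)}$. Then $c(\theta)=h(\theta)\cdot c(\theta^{(h)})$. In particular $h(\theta)\mid c(\theta)$.
   Context: Substitution $\theta:\mathbb{A}\to\mathbb{A}^\lambda$ of constant length $\lambda\ge2$, extended by concatenation; primitive: some iterate $\theta^k(a)$ contains all letters for each $a$. Standing assumptions: $\theta(a_0)_0=a_0$ for some $a_0$, $\theta$ injective on letters, subshift infinite; $u$ the fixed point with $u[0]=a_0$. Height $h(\theta)=\max\{m\ge1:\gcd(m,\lambda)=1,\ m\mid\gcd\{r\ge1:u[r]=u[0]\}\}$; column number $c(\theta)=\min_{k\ge1,0\le j<\lambda^k}|\{\theta^k(a)_j:a\in\mathbb{A}\}|$ (for any primitive substitution these are defined analogously, using a fixed point of a suitable power). Pure base: let $\mathbb{A}^{(h)}=\{u[mh,mh+h-1]:m\ge0\}\subset\mathbb{A}^h$ and define $\theta^{(h)}:\mathbb{A}^{(h)}\to(\mathbb{A}^{(h)})^\lambda$ by $\theta^{(h)}(w)_j=\theta(w)[jh,(j+1)h-1]$ for $0\le j<\lambda$ (here $\theta(w)$ is the concatenation $\theta(w_0)\cdots\theta(w_{h-1})$ of length $\lambda h$); $\theta^{(h)}$ is a primitive substitution of length $\lambda$. *)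

theory Defs
  imports Main
begin

definition subst_word :: "('a \<Rightarrow> 'a list) \<Rightarrow> 'a list \<Rightarrow> 'a list" where
  "subst_word \<theta> w = concat (map \<theta> w)"

definition subst_iter :: "('a \<Rightarrow> 'a list) \<Rightarrow> nat \<Rightarrow> 'a \<Rightarrow> 'a list" where
  "subst_iter \<theta> k a = (subst_word \<theta> ^^ k) [a]"

definition const_length_subst :: "'a set \<Rightarrow> nat \<Rightarrow> ('a \<Rightarrow> 'a list) \<Rightarrow> bool" where
  "const_length_subst A lam \<theta> \<longleftrightarrow> finite A \<and> A \<noteq> {} \<and> lam \<ge> 2 \<and>
     (\<forall>a\<in>A. length (\<theta> a) = lam \<and> set (\<theta> a) \<subseteq> A)"

definition primitive_subst :: "'a set \<Rightarrow> nat \<Rightarrow> ('a \<Rightarrow> 'a list) \<Rightarrow> bool" where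
  "primitive_subst A lam \<theta> \<longleftrightarrow> const_length_subst A lam \<theta> \<and>
     (\<exists>k\<ge>1. \<forall>a\<in>A. set (subst_iter \<theta> k a) = A)"

definition is_factor :: "'a list \<Rightarrow> 'a list \<Rightarrow> bool" where
  "is_factor w v \<longleftrightarrow> (\<exists>p s. v = p @ w @ s)"

definition subst_language :: "'a set \<Rightarrow> ('a \<Rightarrow> 'a list) \<Rightarrow> 'a list set" where
  "subst_language A \<theta> = {w. \<exists>a\<in>A. \<exists>k. is_factor w (subst_iter \<theta> k a)}"

definition subshift :: "'a set \<Rightarrow> ('a \<Rightarrow> 'a list) \<Rightarrow> (int \<Rightarrow> 'a) set" where
  "subshift A \<theta> = {x. \<forall>i n. map (\<lambda>t. x (i + int t)) [0..<n] \<in> subst_language A \<theta>}"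

text \<open>The one-sided fixed point u = lim theta^n(a0) (when theta(a0)_0 = a0):
  u[n] is the n-th letter of theta^(n+1)(a0), which has length lam^(n+1) > n.\<close>
definition fixed_point :: "('a \<Rightarrow> 'a list) \<Rightarrow> 'a \<Rightarrow> nat \<Rightarrow> 'a" where
  "fixed_point \<theta> a0 n = subst_iter \<theta> (Suc n) a0 ! n"

definition height :: "nat \<Rightarrow> ('a \<Rightarrow> 'a list) \<Rightarrow> 'a \<Rightarrow> nat" where
  "height lam \<theta> a0 = (GREATEST m. m \<ge> 1 \<and> coprime m lam \<and>
      m dvd Gcd {r. r \<ge> 1 \<and> fixed_point \<theta> a0 r = fixed_point \<theta> a0 0})"

definition column_number :: "'a set \<Rightarrow> nat \<Rightarrow> ('a \<Rightarrow> 'a list) \<Rightarrow> nat" where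
  "column_number A lam \<theta> = Min {card ((\<lambda>a. subst_iter \<theta> k a ! j) ` A) | k j. k \<ge> 1 \<and> j < lam ^ k}"

definition pure_base_alphabet :: "('a \<Rightarrow> 'a list) \<Rightarrow> 'a \<Rightarrow> nat \<Rightarrow> 'a list set" where
  "pure_base_alphabet \<theta> a0 h = {map (fixed_point \<theta> a0) [m * h..<m * h + h] | m. True}"

definition pure_base :: "nat \<Rightarrow> ('a \<Rightarrow> 'a list) \<Rightarrow> nat \<Rightarrow> 'a list \<Rightarrow> 'a list list" where
  "pure_base lam \<theta> h w = map (\<lambda>j. take h (drop (j * h) (subst_word \<theta> w))) [0..<lam]"

end

theory Submission
  imports Defs "HOL-Number_Theory.Cong"
begin

text \<open>
  Let \<open>h\<close> divide every return time of the fixed point \<open>u\<close> to its first letter \<open>a0\<close> and be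
  coprime to \<open>\<lambda>\<close> (the height is the largest such \<open>h\<close>). Mapping two occurrences of a letter to
  \<open>a0\<close> by the same column of \<open>\<theta>^k\<close> shows that a letter determines its positions in \<open>u\<close> modulo
  \<open>h\<close>, which splits the alphabet into \<open>h\<close> residue classes. Column \<open>j\<close> of \<open>\<theta>^k\<close> sends class \<open>q\<close>
  into class \<open>q \<lambda>^k + j mod h\<close>, and \<open>q \<mapsto> q \<lambda>^k + j\<close> permutes the residues, so the size of a
  column is the sum of the sizes of its restrictions to the classes. Restricted columns of minimal
  size \<open>\<mu>\<close> can be routed into one another and composed into a single column that is minimal on
  every class, whence \<open>c(\<theta>) = h \<mu>\<close>. Finally \<open>c(\<theta>^(h)) = \<mu>\<close>: the first letters of a column of the
  pure base form a restricted column of \<open>\<theta>\<close>, and conversely a block of \<open>h\<close> letters lying inside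
  \<open>\<theta>^l\<close> of a single letter is a function of that letter.
\<close>

lemma subst_word_append: "subst_word \<theta> (xs @ ys) = subst_word \<theta> xs @ subst_word \<theta> ys"
  by (simp add: subst_word_def)

lemma subst_word_concat: "subst_word \<theta> (concat xss) = concat (map (subst_word \<theta>) xss)"
  by (induction xss) (simp_all add: subst_word_def)

lemma subst_word_pow_append:
  "(subst_word \<theta> ^^ k) (xs @ ys) = (subst_word \<theta> ^^ k) xs @ (subst_word \<theta> ^^ k) ys"
  by (induction k) (simp_all add: subst_word_append)

lemma subst_word_pow_eq_concat: "(subst_word \<theta> ^^ k) w = concat (map (subst_iter \<theta> k) w)"
proof (induction w)
  case Nil
  show ?case by (induction k) (simp_all add: subst_word_def)
next
  case (Cons x w)
  then show ?case
    using subst_word_pow_append[where xs = "[x]" and ys = w] by (simp add: subst_iter_def)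
qed

lemma subst_iter_add: "subst_iter \<theta> (K + k) a = (subst_word \<theta> ^^ k) (subst_iter \<theta> K a)"
  by (simp add: subst_iter_def funpow_add add.commute[of K])

lemma subst_iter_1: "subst_iter \<theta> 1 a = \<theta> a"
  by (simp add: subst_iter_def subst_word_def)

lemma nth_concat_uniform:
  assumes "\<forall>x\<in>set xss. length x = L" "i < length xss" "r < L"
  shows "concat xss ! (i * L + r) = xss ! i ! r"
  using assms
proof (induction xss arbitrary: i)
  case (Cons x xss)
  then show ?case by (cases i) (simp_all add: nth_append add.assoc)
qed simp

lemma take_drop_concat_uniform:
  assumes "\<forall>x\<in>set xss. length x = L" "j < length xss"
  shows "take L (drop (j * L) (concat xss)) = xss ! j"
  using assms
proof (induction xss arbitrary: j)
  case (Cons x xss)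
  then show ?case by (cases j) (simp_all add: add.commute)
qed simp

lemma concat_take_drop_blocks:
  "length xs = n * L \<Longrightarrow> concat (map (\<lambda>j. take L (drop (j * L) xs)) [0..<n]) = xs"
proof (induction n arbitrary: xs)
  case (Suc n)
  have "[0..<Suc n] = 0 # map Suc [0..<n]"
    by (simp add: map_Suc_upt upt_conv_Cons)
  then show ?case
    using Suc.IH[of "drop L xs"] Suc.prems by (simp del: upt_Suc add: o_def add.commute)
qed simp

lemma mult_add_less_mult: "(J::nat) < a \<Longrightarrow> j < b \<Longrightarrow> J * b + j < a * b"
  by (metis add.commute add_less_cancel_left less_le_trans mult_Suc mult_le_mono1 Suc_leI)

lemma multiple_in_window:
  fixes h M x :: nat
  assumes "h > 0" "2 * h \<le> M"
  obtains J s where "J * h = x + s" "s + h \<le> M"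
proof -
  define J where "J = (x + h - 1) div h"
  have "x + h - 1 = J * h + (x + h - 1) mod h"
    unfolding J_def by simp
  moreover have "(x + h - 1) mod h < h"
    using assms(1) by simp
  ultimately have "x \<le> J * h" "J * h + h \<le> x + M"
    using assms by linarith+
  then show ?thesis
    using that[of J "J * h - x"] by simp
qed

lemma length_pure_base [simp]: "length (pure_base lam \<theta> h w) = lam"
  by (simp add: pure_base_def)

lemma length_concat_map_pure_base: "length (concat (map (pure_base lam \<theta> h) W)) = lam * length W"
  by (induction W) simp_all

definition column :: "('a \<Rightarrow> 'a list) \<Rightarrow> nat \<Rightarrow> nat \<Rightarrow> 'a \<Rightarrow> 'a" where
  "column \<theta> k j a = subst_iter \<theta> k a ! j"

lemma column_number_eqI:
  assumes "finite A"
    and "\<And>k j. k \<ge> 1 \<Longrightarrow> j < lam ^ k \<Longrightarrow> c \<le> card (column \<theta> k j ` A)"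
    and "k \<ge> 1" "j < lam ^ k" "card (column \<theta> k j ` A) \<le> c"
  shows "column_number A lam \<theta> = c"
proof -
  let ?S = "{card (column \<theta> k j ` A) | k j. k \<ge> 1 \<and> j < lam ^ k}"
  have "finite ?S"
    by (rule finite_subset[of _ "{..card A}"]) (use assms(1) card_image_le in auto)
  moreover have "c \<in> ?S"
    using assms(2-5) le_antisym by blast
  ultimately have "Min ?S = c"
    using assms(2) by (intro Min_eqI) auto
  then show ?thesis
    by (simp add: column_number_def column_def[abs_def])
qed

section \<open>Constant-length substitutions and the pure base\<close>

locale const_subst =
  fixes A :: "'a set" and lam :: nat and \<theta> :: "'a \<Rightarrow> 'a list"
  assumes const_length: "const_length_subst A lam \<theta>"
begin

lemma finite_alphabet: "finite A"
  and lam_ge_2: "lam \<ge> 2"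
  and length_subst: "a \<in> A \<Longrightarrow> length (\<theta> a) = lam"
  and set_subst: "a \<in> A \<Longrightarrow> set (\<theta> a) \<subseteq> A"
  using const_length by (auto simp: const_length_subst_def)

lemma lam_pos: "lam > 0"
  using lam_ge_2 by simp

lemma less_lam_pow: "n < lam ^ n"
proof -
  have "n < 2 ^ n"
    by (rule less_exp)
  also have "\<dots> \<le> lam ^ n"
    using lam_ge_2 by (rule power_mono) simp
  finally show ?thesis .
qed

lemma subst_word_pow_words:
  assumes "set w \<subseteq> A"
  shows "length ((subst_word \<theta> ^^ k) w) = lam ^ k * length w \<and> set ((subst_word \<theta> ^^ k) w) \<subseteq> A"
proof (induction k)
  case (Suc k)
  have "length (subst_word \<theta> v) = lam * length v \<and> set (subst_word \<theta> v) \<subseteq> A" if "set v \<subseteq> A" for v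
    using that by (induction v) (auto simp: subst_word_def length_subst dest: set_subst)
  then show ?case
    using Suc by simp
qed (use assms in simp)

lemma length_subst_iter: "a \<in> A \<Longrightarrow> length (subst_iter \<theta> k a) = lam ^ k"
  and set_subst_iter: "a \<in> A \<Longrightarrow> set (subst_iter \<theta> k a) \<subseteq> A"
  using subst_word_pow_words[of "[a]" k] by (simp_all add: subst_iter_def)

lemma column_in_alphabet: "a \<in> A \<Longrightarrow> j < lam ^ k \<Longrightarrow> column \<theta> k j a \<in> A"
  by (metis column_def length_subst_iter nth_mem set_subst_iter subsetD)

lemma nth_subst_word_pow:
  assumes "set w \<subseteq> A" "i < length w" "r < lam ^ k"
  shows "(subst_word \<theta> ^^ k) w ! (i * lam ^ k + r) = column \<theta> k r (w ! i)"
  unfolding subst_word_pow_eq_concat column_def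
  using assms by (subst nth_concat_uniform) (auto simp: length_subst_iter)

lemma column_add:
  assumes "a \<in> A" "J < lam ^ K" "j < lam ^ k"
  shows "column \<theta> (K + k) (J * lam ^ k + j) a = column \<theta> k j (column \<theta> K J a)"
  using assms by (simp add: column_def subst_iter_add nth_subst_word_pow[unfolded column_def]
      length_subst_iter set_subst_iter)

lemma column_image_add:
  assumes "X \<subseteq> A" "J < lam ^ K" "j < lam ^ k"
  shows "column \<theta> (K + k) (J * lam ^ k + j) ` X = column \<theta> k j ` column \<theta> K J ` X"
  using assms column_add by (force simp: image_image)

lemma index_add_less: "J < lam ^ K \<Longrightarrow> j < lam ^ k \<Longrightarrow> J * lam ^ k + j < lam ^ (K + k)"
  unfolding power_add by (rule mult_add_less_mult)

lemma pure_base_blocks: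
  assumes "length w = h" "set w \<subseteq> A"
  shows "\<forall>v\<in>set (pure_base lam \<theta> h w). length v = h \<and> set v \<subseteq> A"
    and "concat (pure_base lam \<theta> h w) = subst_word \<theta> w"
proof -
  have len: "length (subst_word \<theta> w) = lam * h" and set: "set (subst_word \<theta> w) \<subseteq> A"
    using subst_word_pow_words[OF assms(2), of 1] assms(1) by auto
  have "length (take h (drop (j * h) (subst_word \<theta> w))) = h" if "j < lam" for j
  proof -
    have "(j + 1) * h \<le> lam * h"
      using that by (intro mult_right_mono) auto
    then show ?thesis
      using len by simp
  qed
  moreover have "set (take h (drop (j * h) (subst_word \<theta> w))) \<subseteq> A" for j
    using set set_take_subset set_drop_subset by (metis subset_trans)
  ultimately show "\<forall>v\<in>set (pure_base lam \<theta> h w). length v = h \<and> set v \<subseteq> A"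
    by (auto simp: pure_base_def)
  show "concat (pure_base lam \<theta> h w) = subst_word \<theta> w"
    unfolding pure_base_def by (rule concat_take_drop_blocks) (simp add: len mult.commute)
qed

lemma concat_map_pure_base:
  assumes "\<forall>v\<in>set W. length v = h \<and> set v \<subseteq> A"
  shows "\<forall>v\<in>set (concat (map (pure_base lam \<theta> h) W)). length v = h \<and> set v \<subseteq> A"
    and "concat (concat (map (pure_base lam \<theta> h) W)) = subst_word \<theta> (concat W)"
proof -
  show "\<forall>v\<in>set (concat (map (pure_base lam \<theta> h) W)). length v = h \<and> set v \<subseteq> A"
  proof
    fix v assume "v \<in> set (concat (map (pure_base lam \<theta> h) W))"
    then obtain x where "x \<in> set W" "v \<in> set (pure_base lam \<theta> h x)"
      by auto
    with assms pure_base_blocks(1)[of x h] show "length v = h \<and> set v \<subseteq> A"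
      by blast
  qed
  have "concat (concat (map (pure_base lam \<theta> h) W)) = concat (map (concat \<circ> pure_base lam \<theta> h) W)"
    by (induction W) simp_all
  also have "map (concat \<circ> pure_base lam \<theta> h) W = map (subst_word \<theta>) W"
    using assms pure_base_blocks(2) by (intro map_cong) auto
  finally show "concat (concat (map (pure_base lam \<theta> h) W)) = subst_word \<theta> (concat W)"
    by (simp only: subst_word_concat)
qed

lemma concat_pure_base_iter:
  assumes "length w = h" "set w \<subseteq> A"
  shows "length (subst_iter (pure_base lam \<theta> h) k w) = lam ^ k
    \<and> (\<forall>v\<in>set (subst_iter (pure_base lam \<theta> h) k w). length v = h \<and> set v \<subseteq> A)
    \<and> concat (subst_iter (pure_base lam \<theta> h) k w) = (subst_word \<theta> ^^ k) w"
proof (induction k)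
  case 0
  then show ?case
    using assms by (simp add: subst_iter_def)
next
  case (Suc k)
  let ?W = "subst_iter (pure_base lam \<theta> h) k w"
  have step: "subst_iter (pure_base lam \<theta> h) (Suc k) w = concat (map (pure_base lam \<theta> h) ?W)"
    by (simp add: subst_iter_def subst_word_def)
  from Suc have len: "length ?W = lam ^ k"
    and blocks: "\<forall>v\<in>set ?W. length v = h \<and> set v \<subseteq> A"
    and concat: "concat ?W = (subst_word \<theta> ^^ k) w"
    by blast+
  show ?case
    unfolding step
    using concat_map_pure_base[OF blocks] len concat length_concat_map_pure_base[of lam \<theta> h ?W]
    by simp
qed

lemma column_pure_base:
  assumes "length w = h" "set w \<subseteq> A" "j < lam ^ k"
  shows "column (pure_base lam \<theta> h) k j w = take h (drop (j * h) ((subst_word \<theta> ^^ k) w))"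
proof -
  have "length (subst_iter (pure_base lam \<theta> h) k w) = lam ^ k"
    and "\<forall>v\<in>set (subst_iter (pure_base lam \<theta> h) k w). length v = h"
    and "concat (subst_iter (pure_base lam \<theta> h) k w) = (subst_word \<theta> ^^ k) w"
    using concat_pure_base_iter[OF assms(1,2), of k] by blast+
  then show ?thesis
    using take_drop_concat_uniform[of "subst_iter (pure_base lam \<theta> h) k w" h j] assms(3)
    by (simp add: column_def)
qed

end

section \<open>The fixed point\<close>

definition return_times :: "('a \<Rightarrow> 'a list) \<Rightarrow> 'a \<Rightarrow> nat set" where
  "return_times \<theta> a0 = {r. r \<ge> 1 \<and> fixed_point \<theta> a0 r = fixed_point \<theta> a0 0}"

locale subst_fixed_point = const_subst +
  fixes a0 :: 'a
  assumes a0_in: "a0 \<in> A" and starts_with_a0: "\<theta> a0 ! 0 = a0"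
begin

abbreviation u :: "nat \<Rightarrow> 'a" where
  "u \<equiv> fixed_point \<theta> a0"

lemma subst_iter_a0_prefix: "m \<le> m' \<Longrightarrow> \<exists>s. subst_iter \<theta> m' a0 = subst_iter \<theta> m a0 @ s"
proof (induction m' rule: dec_induct)
  case (step n)
  have "\<theta> a0 = [a0] @ tl (\<theta> a0)"
    using length_subst[OF a0_in] lam_ge_2 starts_with_a0 by (cases "\<theta> a0") auto
  then have "subst_iter \<theta> (1 + n) a0 = subst_iter \<theta> n a0 @ (subst_word \<theta> ^^ n) (tl (\<theta> a0))"
    unfolding subst_iter_add subst_iter_1
    by (metis subst_iter_def subst_word_pow_append)
  with step.IH show ?case
    by auto
qed simp

lemma fixed_point_eq_nth: "n < lam ^ m \<Longrightarrow> u n = subst_iter \<theta> m a0 ! n"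
proof -
  assume n: "n < lam ^ m"
  define M where "M = max m (Suc n)"
  obtain s1 where s1: "subst_iter \<theta> M a0 = subst_iter \<theta> m a0 @ s1"
    using subst_iter_a0_prefix[of m M] unfolding M_def by auto
  obtain s2 where s2: "subst_iter \<theta> M a0 = subst_iter \<theta> (Suc n) a0 @ s2"
    using subst_iter_a0_prefix[of "Suc n" M] unfolding M_def by auto
  have "n < lam ^ Suc n"
    using less_lam_pow[of n] lam_pos by (simp add: less_le_trans)
  then have "u n = subst_iter \<theta> M a0 ! n"
    using s2 length_subst_iter[OF a0_in] by (simp add: fixed_point_def nth_append)
  also have "\<dots> = subst_iter \<theta> m a0 ! n"
    using s1 n length_subst_iter[OF a0_in] by (simp add: nth_append)
  finally show ?thesis .
qed

lemma fixed_point_0: "u 0 = a0"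
  using fixed_point_eq_nth[of 0 1] lam_pos starts_with_a0 subst_iter_1[of \<theta> a0] by simp

lemma fixed_point_in_alphabet: "u n \<in> A"
  using fixed_point_eq_nth[OF less_lam_pow] column_in_alphabet[OF a0_in less_lam_pow]
  by (simp add: column_def)

lemma fixed_point_self_similar: "r < lam ^ k \<Longrightarrow> u (n * lam ^ k + r) = column \<theta> k r (u n)"
  using fixed_point_eq_nth[OF index_add_less[OF less_lam_pow]] fixed_point_eq_nth[OF less_lam_pow]
    column_add[OF a0_in less_lam_pow]
  by (simp add: column_def)

lemma subst_word_pow_factor:
  "(subst_word \<theta> ^^ k) (map u [n..<n + L]) = map u [n * lam ^ k..<(n + L) * lam ^ k]"
proof (rule nth_equalityI)
  have factor_in: "set (map u [n..<n + L]) \<subseteq> A"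
    using fixed_point_in_alphabet by auto
  then show len: "length ((subst_word \<theta> ^^ k) (map u [n..<n + L]))
      = length (map u [n * lam ^ k..<(n + L) * lam ^ k])"
    using subst_word_pow_words[of _ k] by (simp add: algebra_simps)
  fix p
  assume "p < length ((subst_word \<theta> ^^ k) (map u [n..<n + L]))"
  then have p: "p < L * lam ^ k"
    using len by (simp add: algebra_simps)
  define i r where "i = p div lam ^ k" and "r = p mod lam ^ k"
  have p_eq: "p = i * lam ^ k + r" and r: "r < lam ^ k" and i: "i < L"
    using p lam_pos by (auto simp: i_def r_def less_mult_imp_div_less div_mult_mod_eq)
  have "(subst_word \<theta> ^^ k) (map u [n..<n + L]) ! p = column \<theta> k r (u (n + i))"
    unfolding p_eq using nth_subst_word_pow[OF factor_in _ r, of i] i by simp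
  also have "\<dots> = u (n * lam ^ k + p)"
    using fixed_point_self_similar[OF r, of "n + i"] by (simp add: p_eq algebra_simps)
  finally show "(subst_word \<theta> ^^ k) (map u [n..<n + L]) ! p = map u [n * lam ^ k..<(n + L) * lam ^ k] ! p"
    using p by (simp add: algebra_simps)
qed

end

locale primitive_fixed_point = subst_fixed_point +
  assumes primitive: "\<exists>k\<ge>1. \<forall>a\<in>A. set (subst_iter \<theta> k a) = A"
begin

lemma column_reaches:
  assumes "a \<in> A" "b \<in> A"
  obtains k j where "j < lam ^ k" "column \<theta> k j a = b"
proof -
  obtain k where "\<forall>a\<in>A. set (subst_iter \<theta> k a) = A"
    using primitive by blast
  then have "b \<in> set (subst_iter \<theta> k a)"
    using assms by blast
  then show ?thesis
    using that length_subst_iter[OF assms(1)] by (auto simp: in_set_conv_nth column_def)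
qed

lemma occurs_in_fixed_point:
  assumes "a \<in> A"
  obtains n where "u n = a"
proof -
  obtain k j where "j < lam ^ k" "column \<theta> k j a0 = a"
    using column_reaches[OF a0_in assms] .
  then show ?thesis
    using that fixed_point_self_similar[of j k 0] fixed_point_0 by auto
qed

lemma return_time_dvd: "u n = a0 \<Longrightarrow> Gcd (return_times \<theta> a0) dvd n"
  by (cases "n = 0") (auto intro: Gcd_dvd simp: return_times_def fixed_point_0)

lemma Gcd_return_times_pos: "Gcd (return_times \<theta> a0) \<noteq> 0"
proof -
  obtain k j where j: "j < lam ^ k" and "column \<theta> k j (u 1) = a0"
    using column_reaches[OF fixed_point_in_alphabet a0_in] .
  then have "u (lam ^ k + j) = a0"
    using fixed_point_self_similar[OF j, of 1] by simp
  moreover have "lam ^ k + j \<noteq> 0"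
    using lam_pos by simp
  ultimately show ?thesis
    using return_time_dvd by (metis dvd_0_left_iff)
qed

end

section \<open>Residue classes of letters\<close>

locale return_period = primitive_fixed_point +
  fixes h :: nat
  assumes period_pos: "h \<ge> 1"
    and coprime_period: "coprime h lam"
    and period_dvd_return_times: "h dvd Gcd (return_times \<theta> a0)"
begin

lemma shift_cong_iff: "[q * lam ^ k + j = q' * lam ^ k + j] (mod h) \<longleftrightarrow> [q = q'] (mod h)"
proof -
  have "coprime (lam ^ k) h"
    using coprime_period by (simp add: coprime_commute)
  then show ?thesis
    by (simp only: cong_add_rcancel_nat cong_mult_rcancel_nat)
qed

lemma fixed_point_cong:
  assumes "u n = u m"
  shows "[n = m] (mod h)"
proof -
  obtain k j where j: "j < lam ^ k" and "column \<theta> k j (u n) = a0"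
    using column_reaches[OF fixed_point_in_alphabet a0_in] .
  then have "u (n * lam ^ k + j) = a0" "u (m * lam ^ k + j) = a0"
    using fixed_point_self_similar[OF j] assms by simp_all
  then have "[n * lam ^ k + j = 0] (mod h)" "[m * lam ^ k + j = 0] (mod h)"
    using return_time_dvd period_dvd_return_times dvd_trans by (auto simp: cong_0_iff)
  then have "[n * lam ^ k + j = m * lam ^ k + j] (mod h)"
    by (meson cong_sym cong_trans)
  then show ?thesis
    by (simp add: shift_cong_iff)
qed

definition residue_class :: "nat \<Rightarrow> 'a set" where
  "residue_class q = {u n | n. n mod h = q}"

lemma residue_class_subset: "residue_class q \<subseteq> A"
  using fixed_point_in_alphabet by (auto simp: residue_class_def)

lemma finite_residue_class: "finite (residue_class q)"
  using finite_subset[OF residue_class_subset finite_alphabet] .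

lemma residue_class_eq: "q < h \<Longrightarrow> residue_class q = range (\<lambda>m. u (m * h + q))"
proof
  show "residue_class q \<subseteq> range (\<lambda>m. u (m * h + q))"
  proof
    fix b
    assume "b \<in> residue_class q"
    then obtain n where "n mod h = q" "b = u n"
      by (auto simp: residue_class_def)
    moreover have "n = n div h * h + n mod h"
      by simp
    ultimately have "b = u (n div h * h + q)"
      by metis
    then show "b \<in> range (\<lambda>m. u (m * h + q))"
      by blast
  qed
qed (auto simp: residue_class_def)

lemma alphabet_eq_UN_residue_class: "A = (\<Union>q<h. residue_class q)"
proof
  show "A \<subseteq> (\<Union>q<h. residue_class q)"
  proof
    fix a
    assume "a \<in> A"
    then obtain n where "u n = a"
      by (rule occurs_in_fixed_point)
    then have "a \<in> residue_class (n mod h)" and "n mod h < h"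
      using period_pos by (auto simp: residue_class_def)
    then show "a \<in> (\<Union>q<h. residue_class q)"
      by blast
  qed
qed (use residue_class_subset in blast)

lemma residue_class_disjoint:
  assumes "q \<noteq> q'"
  shows "residue_class q \<inter> residue_class q' = {}"
proof -
  have False if "n mod h = q" "m mod h = q'" "u n = u m" for n m
    using fixed_point_cong[OF that(3)] that(1,2) assms by (simp add: cong_def)
  then show ?thesis
    unfolding residue_class_def by blast
qed

lemma column_residue_class:
  assumes "j < lam ^ k"
  shows "column \<theta> k j ` residue_class q \<subseteq> residue_class ((q * lam ^ k + j) mod h)"
proof
  fix b
  assume "b \<in> column \<theta> k j ` residue_class q"
  then obtain n where n: "n mod h = q" and b: "b = u (n * lam ^ k + j)"
    using fixed_point_self_similar[OF assms] by (auto simp: residue_class_def)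
  have "[n = q] (mod h)"
    using n by (auto simp: cong_def)
  then have "[n * lam ^ k + j = q * lam ^ k + j] (mod h)"
    by (simp only: shift_cong_iff)
  then show "b \<in> residue_class ((q * lam ^ k + j) mod h)"
    using b by (auto simp: residue_class_def cong_def)
qed

lemma card_column_image_alphabet:
  assumes "j < lam ^ k"
  shows "card (column \<theta> k j ` A) = (\<Sum>q<h. card (column \<theta> k j ` residue_class q))"
proof -
  have "column \<theta> k j ` residue_class q \<inter> column \<theta> k j ` residue_class q' = {}"
    if "q < h" "q' < h" "q \<noteq> q'" for q q'
  proof -
    have "(q * lam ^ k + j) mod h \<noteq> (q' * lam ^ k + j) mod h"
    proof
      assume "(q * lam ^ k + j) mod h = (q' * lam ^ k + j) mod h"
      then have "[q = q'] (mod h)"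
        by (simp only: cong_def[symmetric] shift_cong_iff)
      then show False
        using that cong_less_modulus_unique_nat by blast
    qed
    then show ?thesis
      using residue_class_disjoint column_residue_class[OF assms] by blast
  qed
  then have "card (\<Union>q<h. column \<theta> k j ` residue_class q) = (\<Sum>q<h. card (column \<theta> k j ` residue_class q))"
    by (intro card_UN_disjoint) (auto simp: finite_residue_class)
  then show ?thesis
    by (subst alphabet_eq_UN_residue_class) (simp add: image_UN)
qed

text \<open>This is \<open>\<mu>\<close>; \<open>column_number_pure_base\<close> identifies it with \<open>c(\<theta>^(h))\<close>.\<close>

definition class_column_number :: nat where
  "class_column_number = Min {card (column \<theta> k j ` residue_class q) | k j q. k \<ge> 1 \<and> j < lam ^ k \<and> q < h}"

lemma class_column_numbers_finite:
  "finite {card (column \<theta> k j ` residue_class q) | k j q. k \<ge> 1 \<and> j < lam ^ k \<and> q < h}"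
proof (rule finite_subset)
  show "{card (column \<theta> k j ` residue_class q) | k j q. k \<ge> 1 \<and> j < lam ^ k \<and> q < h} \<subseteq> {..card A}"
    using card_image_le[OF finite_residue_class] card_mono[OF finite_alphabet residue_class_subset]
    by (auto intro: le_trans)
qed simp

lemma class_column_number_le:
  "k \<ge> 1 \<Longrightarrow> j < lam ^ k \<Longrightarrow> q < h \<Longrightarrow> class_column_number \<le> card (column \<theta> k j ` residue_class q)"
  unfolding class_column_number_def by (rule Min_le[OF class_column_numbers_finite]) blast

lemma class_column_number_attained:
  obtains k j q where "k \<ge> 1" "j < lam ^ k" "q < h"
    and "card (column \<theta> k j ` residue_class q) = class_column_number"
proof -
  have "card (column \<theta> 1 0 ` residue_class 0)
      \<in> {card (column \<theta> k j ` residue_class q) | k j q. k \<ge> 1 \<and> j < lam ^ k \<and> q < h}"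
    using lam_pos period_pos by force
  then have "class_column_number
      \<in> {card (column \<theta> k j ` residue_class q) | k j q. k \<ge> 1 \<and> j < lam ^ k \<and> q < h}"
    unfolding class_column_number_def using class_column_numbers_finite by (intro Min_in) auto
  then show ?thesis
    using that by auto
qed

lemma column_into_residue_class:
  assumes "q' < h"
  obtains J where "J < lam ^ h" "column \<theta> h J ` residue_class q \<subseteq> residue_class q'"
proof -
  define r where "r = (q * lam ^ h) mod h"
  define J where "J = (q' + h - r) mod h"
  have "J < h"
    using period_pos by (simp add: J_def)
  then have "J < lam ^ h"
    using less_lam_pow[of h] by simp
  moreover have "(q * lam ^ h + J) mod h = q'"
  proof -
    have "(q * lam ^ h + J) mod h = (r + (q' + h - r)) mod h"
      by (simp add: r_def J_def mod_add_left_eq mod_add_right_eq)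
    also have "\<dots> = (q' + h) mod h"
      using period_pos mod_less_divisor[of h "q * lam ^ h"] by (simp add: r_def[symmetric])
    finally show ?thesis
      using assms by simp
  qed
  ultimately show ?thesis
    using that column_residue_class by metis
qed

lemma every_class_attains_min:
  assumes "q < h"
  obtains k j where "k \<ge> 1" "j < lam ^ k"
    and "card (column \<theta> k j ` residue_class q) = class_column_number"
proof -
  obtain k0 j0 q0 where min: "k0 \<ge> 1" "j0 < lam ^ k0" "q0 < h"
    "card (column \<theta> k0 j0 ` residue_class q0) = class_column_number"
    by (rule class_column_number_attained)
  obtain J where J: "J < lam ^ h" "column \<theta> h J ` residue_class q \<subseteq> residue_class q0"
    using column_into_residue_class[OF min(3)] .
  let ?k = "h + k0" and ?j = "J * lam ^ k0 + j0"
  have "column \<theta> ?k ?j ` residue_class q = column \<theta> k0 j0 ` column \<theta> h J ` residue_class q"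
    using column_image_add[OF residue_class_subset J(1) min(2)] .
  also have "card \<dots> \<le> class_column_number"
    using J(2) min(4) by (metis card_mono finite_imageI finite_residue_class image_mono)
  finally have "card (column \<theta> ?k ?j ` residue_class q) \<le> class_column_number" .
  moreover have "?j < lam ^ ?k"
    using index_add_less[OF J(1) min(2)] .
  ultimately show ?thesis
    using that[of ?k ?j] class_column_number_le[of ?k ?j q] min(1) assms by simp
qed

text \<open>Composing with a further column never enlarges an image, so minimality on the first \<open>n\<close>
  classes survives when the image of class \<open>n\<close> is sent through a column minimal on its class.\<close>

lemma min_column_on_initial_classes:
  "n \<le> h \<Longrightarrow> \<exists>K J. K \<ge> 1 \<and> J < lam ^ K
     \<and> (\<forall>q<n. card (column \<theta> K J ` residue_class q) = class_column_number)"
proof (induction n)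
  case 0
  then show ?case
    using lam_pos by (intro exI[of _ 1] exI[of _ 0]) simp
next
  case (Suc n)
  then obtain K J where KJ: "K \<ge> 1" "J < lam ^ K"
    "\<forall>q<n. card (column \<theta> K J ` residue_class q) = class_column_number"
    by auto
  define s where "s = (n * lam ^ K + J) mod h"
  obtain k j where kj: "k \<ge> 1" "j < lam ^ k" "card (column \<theta> k j ` residue_class s) = class_column_number"
    using every_class_attains_min[of s] period_pos by (auto simp: s_def)
  have card_le: "card (column \<theta> k j ` X) \<le> card X" if "finite X" for X
    using that by (rule card_image_le)
  have "card (column \<theta> (K + k) (J * lam ^ k + j) ` residue_class q) \<le> class_column_number"
    if "q < Suc n" for q
  proof (cases "q < n")
    case True
    then show ?thesis
      using column_image_add[OF residue_class_subset KJ(2) kj(2)] KJ(3) card_le finite_residue_class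
      by (metis finite_imageI)
  next
    case False
    then have "q = n"
      using that by simp
    then have "column \<theta> K J ` residue_class q \<subseteq> residue_class s"
      using column_residue_class[OF KJ(2)] by (simp add: s_def)
    then show ?thesis
      using column_image_add[OF residue_class_subset KJ(2) kj(2)] kj(3)
      by (metis card_mono finite_imageI finite_residue_class image_mono)
  qed
  moreover have "J * lam ^ k + j < lam ^ (K + k)"
    using index_add_less[OF KJ(2) kj(2)] .
  ultimately show ?case
    using Suc.prems KJ(1) class_column_number_le
    by (intro exI[of _ "K + k"] exI[of _ "J * lam ^ k + j"]) (auto intro: le_antisym)
qed

lemma column_number_eq_period_mult: "column_number A lam \<theta> = h * class_column_number"
proof -
  obtain K J where KJ: "K \<ge> 1" "J < lam ^ K"
    "\<forall>q<h. card (column \<theta> K J ` residue_class q) = class_column_number"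
    using min_column_on_initial_classes[of h] by auto
  show ?thesis
  proof (rule column_number_eqI[OF finite_alphabet _ KJ(1,2)])
    fix k j
    assume "k \<ge> 1" "j < lam ^ k"
    then have "(\<Sum>q<h. class_column_number) \<le> (\<Sum>q<h. card (column \<theta> k j ` residue_class q))"
      by (intro sum_mono class_column_number_le) auto
    then show "h * class_column_number \<le> card (column \<theta> k j ` A)"
      using card_column_image_alphabet[OF \<open>j < lam ^ k\<close>] by simp
  next
    show "card (column \<theta> K J ` A) \<le> h * class_column_number"
      using card_column_image_alphabet[OF KJ(2)] KJ(3) by simp
  qed
qed

section \<open>Columns of the pure base\<close>

abbreviation block :: "nat \<Rightarrow> 'a list" where
  "block p \<equiv> map u [p..<p + h]"

lemma pure_base_alphabet_eq: "pure_base_alphabet \<theta> a0 h = range (\<lambda>m. block (m * h))"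
  by (auto simp: pure_base_alphabet_def)

lemma finite_pure_base_alphabet: "finite (pure_base_alphabet \<theta> a0 h)"
proof (rule finite_subset)
  show "pure_base_alphabet \<theta> a0 h \<subseteq> {w. set w \<subseteq> A \<and> length w = h}"
    using fixed_point_in_alphabet by (auto simp: pure_base_alphabet_eq)
qed (rule finite_lists_length_eq[OF finite_alphabet])

lemma column_pure_base_block:
  assumes "j < lam ^ k"
  shows "column (pure_base lam \<theta> h) k j (block (m * h)) = block (m * h * lam ^ k + j * h)"
proof -
  have "column (pure_base lam \<theta> h) k j (block (m * h))
      = take h (drop (j * h) ((subst_word \<theta> ^^ k) (block (m * h))))"
    by (rule column_pure_base) (use fixed_point_in_alphabet assms in auto)
  also have "(subst_word \<theta> ^^ k) (block (m * h)) = map u [m * h * lam ^ k..<(m * h + h) * lam ^ k]"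
    by (rule subst_word_pow_factor)
  also have "take h (drop (j * h) (map u [m * h * lam ^ k..<(m * h + h) * lam ^ k]))
      = block (m * h * lam ^ k + j * h)"
  proof -
    have "(j + 1) * h \<le> lam ^ k * h"
      using assms by (intro mult_right_mono) auto
    then have "m * h * lam ^ k + j * h + h \<le> (m * h + h) * lam ^ k"
      by (simp add: algebra_simps)
    then show ?thesis
      by (simp add: drop_map take_map add.assoc)
  qed
  finally show ?thesis .
qed

lemma column_image_pure_base_alphabet:
  "j < lam ^ k \<Longrightarrow> column (pure_base lam \<theta> h) k j ` pure_base_alphabet \<theta> a0 h
     = range (\<lambda>m. block (m * h * lam ^ k + j * h))"
  by (auto simp: pure_base_alphabet_eq column_pure_base_block image_image)

lemma class_column_number_le_pure_base:
  assumes "k \<ge> 1" "j < lam ^ k"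
  shows "class_column_number \<le> card (column (pure_base lam \<theta> h) k j ` pure_base_alphabet \<theta> a0 h)"
proof -
  define q r where "q = j * h div lam ^ k" and "r = j * h mod lam ^ k"
  have jh: "j * h = q * lam ^ k + r" and r: "r < lam ^ k" and q: "q < h"
    using assms(2) lam_pos period_pos
    by (auto simp: q_def r_def less_mult_imp_div_less mult.commute)
  have "u (m * h * lam ^ k + j * h) = column \<theta> k r (u (m * h + q))" for m
    using fixed_point_self_similar[OF r, of "m * h + q"] jh by (simp add: algebra_simps)
  then have "(\<lambda>b. b ! 0) ` column (pure_base lam \<theta> h) k j ` pure_base_alphabet \<theta> a0 h
      = column \<theta> k r ` residue_class q"
    using period_pos
    by (auto simp: column_image_pure_base_alphabet[OF assms(2)] residue_class_eq[OF q] image_image)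
  then have "card (column \<theta> k r ` residue_class q)
      \<le> card (column (pure_base lam \<theta> h) k j ` pure_base_alphabet \<theta> a0 h)"
    by (metis card_image_le finite_imageI finite_pure_base_alphabet)
  then show ?thesis
    using class_column_number_le[OF assms(1) r q] by simp
qed

text \<open>Since \<open>\<lambda>^(h+1) \<ge> 2h\<close>, the image of position \<open>j\<close> under \<open>\<theta>^(h+1)\<close> contains a whole block of
  \<open>h\<close> letters starting at a multiple \<open>J h\<close>.\<close>

lemma aligned_block_index:
  assumes "j < lam ^ k"
  obtains J s where "J < lam ^ (k + Suc h)" "J * h = j * lam ^ Suc h + s" "s + h \<le> lam ^ Suc h"
proof -
  have "2 * h \<le> 2 * lam ^ h"
    using less_lam_pow[of h] by simp
  also have "\<dots> \<le> lam ^ Suc h"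
    unfolding power_Suc using lam_ge_2 by (rule mult_right_mono) simp
  finally obtain J s where Js: "J * h = j * lam ^ Suc h + s" "s + h \<le> lam ^ Suc h"
    using multiple_in_window[of h "lam ^ Suc h" "j * lam ^ Suc h"] period_pos by auto
  have "J * h + h \<le> (j + 1) * lam ^ Suc h"
    using Js by simp
  also have "\<dots> \<le> lam ^ k * lam ^ Suc h"
    using assms by (intro mult_right_mono) auto
  finally have "J * h + h \<le> lam ^ (k + Suc h)"
    unfolding power_add .
  moreover have "J \<le> J * h"
    using period_pos by simp
  ultimately have "J < lam ^ (k + Suc h)"
    using period_pos by linarith
  with Js that show ?thesis
    by blast
qed

lemma block_in_column_image:
  assumes "s + h \<le> lam ^ l"
  shows "block (n * lam ^ l + s) = map (\<lambda>t. column \<theta> l (s + t) (u n)) [0..<h]"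
proof (rule nth_equalityI)
  fix t
  assume "t < length (block (n * lam ^ l + s))"
  then have "t < h" "s + t < lam ^ l"
    using assms by simp_all
  then show "block (n * lam ^ l + s) ! t = map (\<lambda>t. column \<theta> l (s + t) (u n)) [0..<h] ! t"
    using fixed_point_self_similar[of "s + t" l n] by (simp add: add.assoc)
qed simp

lemma pure_base_column_le_class_column_number:
  obtains K J where "K \<ge> 1" "J < lam ^ K"
    and "card (column (pure_base lam \<theta> h) K J ` pure_base_alphabet \<theta> a0 h) \<le> class_column_number"
proof -
  obtain k j where kj: "k \<ge> 1" "j < lam ^ k" "card (column \<theta> k j ` residue_class 0) = class_column_number"
    using every_class_attains_min[of 0] period_pos by auto
  define l where "l = Suc h"
  obtain J s where J: "J < lam ^ (k + l)" and Js: "J * h = j * lam ^ l + s" "s + h \<le> lam ^ l"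
    unfolding l_def using aligned_block_index[OF kj(2)] .
  define G where "G a = map (\<lambda>t. column \<theta> l (s + t) a) [0..<h]" for a
  have block_eq: "block (m * h * lam ^ (k + l) + J * h) = G (column \<theta> k j (u (m * h)))" for m
  proof -
    have "m * h * lam ^ (k + l) + J * h = (m * h * lam ^ k + j) * lam ^ l + s"
      using Js by (simp add: power_add algebra_simps)
    then show ?thesis
      by (simp only: G_def block_in_column_image[OF Js(2)] fixed_point_self_similar[OF kj(2)])
  qed
  have "u (m * h) \<in> residue_class 0" for m
    by (auto simp: residue_class_def)
  then have "column (pure_base lam \<theta> h) (k + l) J ` pure_base_alphabet \<theta> a0 h
      \<subseteq> G ` column \<theta> k j ` residue_class 0"
    by (auto simp: column_image_pure_base_alphabet[OF J] block_eq)
  then have "card (column (pure_base lam \<theta> h) (k + l) J ` pure_base_alphabet \<theta> a0 h)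
      \<le> card (G ` column \<theta> k j ` residue_class 0)"
    by (intro card_mono) (simp_all add: finite_residue_class)
  also have "\<dots> \<le> card (column \<theta> k j ` residue_class 0)"
    by (intro card_image_le) (simp add: finite_residue_class)
  finally show ?thesis
    using that[of "k + l" J] J kj(1,3) by simp
qed

lemma column_number_pure_base:
  "column_number (pure_base_alphabet \<theta> a0 h) lam (pure_base lam \<theta> h) = class_column_number"
proof -
  obtain K J where "K \<ge> 1" "J < lam ^ K"
    "card (column (pure_base lam \<theta> h) K J ` pure_base_alphabet \<theta> a0 h) \<le> class_column_number"
    by (rule pure_base_column_le_class_column_number)
  then show ?thesis
    using finite_pure_base_alphabet class_column_number_le_pure_base by (intro column_number_eqI)
qed

theorem column_number_eq_period_mult_pure_base:
  "column_number A lam \<theta> = h * column_number (pure_base_alphabet \<theta> a0 h) lam (pure_base lam \<theta> h)"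
  by (simp add: column_number_eq_period_mult column_number_pure_base)

end

lemma (in primitive_fixed_point) height_is_return_period:
  "height lam \<theta> a0 \<ge> 1 \<and> coprime (height lam \<theta> a0) lam \<and> height lam \<theta> a0 dvd Gcd (return_times \<theta> a0)"
proof -
  let ?P = "\<lambda>m. m \<ge> 1 \<and> coprime m lam \<and> m dvd Gcd (return_times \<theta> a0)"
  have "?P (Greatest ?P)"
  proof (rule GreatestI_nat)
    show "?P 1"
      by simp
    show "\<And>m. ?P m \<Longrightarrow> m \<le> Gcd (return_times \<theta> a0)"
      using Gcd_return_times_pos by (metis dvd_imp_le neq0_conv)
  qed
  then show ?thesis
    by (simp add: height_def return_times_def)
qed

theorem mainTheorem6:
  fixes A :: "'a set" and lam :: nat and \<theta> :: "'a \<Rightarrow> 'a list" and a0 :: 'a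
  assumes "primitive_subst A lam \<theta>"
    and "a0 \<in> A" and "\<theta> a0 ! 0 = a0"
    and "inj_on \<theta> A"
    and "infinite (subshift A \<theta>)"
  shows "column_number A lam \<theta> =
           height lam \<theta> a0 *
           column_number (pure_base_alphabet \<theta> a0 (height lam \<theta> a0)) lam
                         (pure_base lam \<theta> (height lam \<theta> a0))
         \<and> height lam \<theta> a0 dvd column_number A lam \<theta>"
proof -
  interpret primitive_fixed_point A lam \<theta> a0
    using assms(1-3) by unfold_locales (auto simp: primitive_subst_def)
  interpret return_period A lam \<theta> a0 "height lam \<theta> a0"
    using height_is_return_period by unfold_locales auto
  show ?thesis
    using column_number_eq_period_mult_pure_base by simp
qed

end
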